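(* Let $(\mathsf P,\mathcal O)$ be a semitopology and $p\in\mathsf P$. The following are equivalent: (1) $p$ is weakly regular, i.e. $p\in K(p)$; (2) $I(p)$ is a closed neighbourhood of $p$; (3) the set of closed neighbourhoods of $p$, ordered by subset inclusion, has a least element; (4) $I(p)$ is the least element of the set of closed neighbourhoods of $p$ ordered by subset inclusion.
   Context: A semitopology is a pair $(\mathsf P,\mathcal O)$ where $\mathsf P$ is a set and $\mathcal O\subseteq\mathcal P(\mathsf P)$ contains $\varnothing$ and $\mathsf P$ and is closed under arbitrary unions. Points $p,p'$ are intertwined when every open set containing $p$ intersects every open set containing $p'$; $I(p)$ is the set of points intertwined with $p$. $\mathrm{int}(R)$ is the union of all open sets contained in $R$, and $K(p)=\mathrm{int}(I(p))$. The closure $\overline{R}$ of $R$ is the set of points $q$ such that every open set containing $q$ intersects $R$; $C$ is closed when $C=\overline C$ (equivalently, $C$ is the complement of an open set). A closed neighbourhood of $p$ is a closed set $C$ with $p\in\mathrm{int}(C)$. *)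

theory Defs
  imports Main
begin

definition semitopology :: "'a set \<Rightarrow> 'a set set \<Rightarrow> bool" where
  "semitopology P Opn \<longleftrightarrow> Opn \<subseteq> Pow P \<and> {} \<in> Opn \<and> P \<in> Opn \<and> (\<forall>X. X \<subseteq> Opn \<longrightarrow> \<Union>X \<in> Opn)"

definition intertwined :: "'a set set \<Rightarrow> 'a \<Rightarrow> 'a \<Rightarrow> bool" where
  "intertwined Opn p p' \<longleftrightarrow> (\<forall>U\<in>Opn. \<forall>U'\<in>Opn. p \<in> U \<longrightarrow> p' \<in> U' \<longrightarrow> U \<inter> U' \<noteq> {})"

definition intertwined_set :: "'a set \<Rightarrow> 'a set set \<Rightarrow> 'a \<Rightarrow> 'a set" where
  "intertwined_set P Opn p = {p'\<in>P. intertwined Opn p p'}"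

definition sinterior :: "'a set set \<Rightarrow> 'a set \<Rightarrow> 'a set" where
  "sinterior Opn R = \<Union>{U\<in>Opn. U \<subseteq> R}"

definition kernel_K :: "'a set \<Rightarrow> 'a set set \<Rightarrow> 'a \<Rightarrow> 'a set" where
  "kernel_K P Opn p = sinterior Opn (intertwined_set P Opn p)"

definition sclosure :: "'a set \<Rightarrow> 'a set set \<Rightarrow> 'a set \<Rightarrow> 'a set" where
  "sclosure P Opn R = {q\<in>P. \<forall>U\<in>Opn. q \<in> U \<longrightarrow> U \<inter> R \<noteq> {}}"

definition sclosed :: "'a set \<Rightarrow> 'a set set \<Rightarrow> 'a set \<Rightarrow> bool" where
  "sclosed P Opn C \<longleftrightarrow> C = sclosure P Opn C"

definition closed_nbhd :: "'a set \<Rightarrow> 'a set set \<Rightarrow> 'a \<Rightarrow> 'a set \<Rightarrow> bool" where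
  "closed_nbhd P Opn p C \<longleftrightarrow> sclosed P Opn C \<and> p \<in> sinterior Opn C"

definition weakly_regular :: "'a set \<Rightarrow> 'a set set \<Rightarrow> 'a \<Rightarrow> bool" where
  "weakly_regular P Opn p \<longleftrightarrow> p \<in> kernel_K P Opn p"

definition is_least_subset :: "'a set set \<Rightarrow> 'a set \<Rightarrow> bool" where
  "is_least_subset S x \<longleftrightarrow> x \<in> S \<and> (\<forall>y\<in>S. x \<subseteq> y)"

end

theory Submission
  imports Defs
begin

text \<open>\<open>I(p)\<close> is closed and is the intersection of the closures of the open neighbourhoods
  of \<open>p\<close>. Closures of open neighbourhoods are closed neighbourhoods, so \<open>I(p)\<close> lies inside
  every closed neighbourhood and also inside any least one; hence a least closed neighbourhood
  exists exactly when \<open>I(p)\<close> itself is a closed neighbourhood, i.e. when \<open>p \<in> int(I(p)) = K(p)\<close>.\<close>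

lemma sclosure_subset_carrier: "sclosure P Opn R \<subseteq> P"
  unfolding sclosure_def by blast

lemma subset_sclosure: "R \<subseteq> P \<Longrightarrow> R \<subseteq> sclosure P Opn R"
  unfolding sclosure_def by blast

lemma sclosed_sclosure: "sclosed P Opn (sclosure P Opn R)"
  unfolding sclosed_def sclosure_def by blast

lemma sclosed_intertwined_set: "sclosed P Opn (intertwined_set P Opn p)"
  unfolding sclosed_def sclosure_def intertwined_set_def intertwined_def by blast

lemma intertwined_set_iff_in_sclosure_open:
  "q \<in> intertwined_set P Opn p \<longleftrightarrow> q \<in> P \<and> (\<forall>U\<in>Opn. p \<in> U \<longrightarrow> q \<in> sclosure P Opn U)"
  unfolding intertwined_set_def intertwined_def sclosure_def by blast

lemma closed_nbhd_sclosure_open: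
  assumes "semitopology P Opn" "U \<in> Opn" "p \<in> U"
  shows "closed_nbhd P Opn p (sclosure P Opn U)"
proof -
  have "U \<subseteq> sclosure P Opn U"
    using assms(1,2) by (intro subset_sclosure) (auto simp: semitopology_def)
  then show ?thesis
    using assms(2,3) sclosed_sclosure unfolding closed_nbhd_def sinterior_def by blast
qed

lemma intertwined_set_subset_closed_nbhd:
  assumes "closed_nbhd P Opn p C"
  shows "intertwined_set P Opn p \<subseteq> C"
proof
  fix q assume q: "q \<in> intertwined_set P Opn p"
  obtain U where "U \<in> Opn" "U \<subseteq> C" "p \<in> U"
    using assms unfolding closed_nbhd_def sinterior_def by blast
  then have "q \<in> sclosure P Opn C"
    using q unfolding intertwined_set_iff_in_sclosure_open sclosure_def by blast
  then show "q \<in> C"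
    using assms unfolding closed_nbhd_def sclosed_def by simp
qed

lemma weakly_regular_iff_closed_nbhd_intertwined_set:
  "weakly_regular P Opn p \<longleftrightarrow> closed_nbhd P Opn p (intertwined_set P Opn p)"
  unfolding weakly_regular_def closed_nbhd_def kernel_K_def
  by (simp add: sclosed_intertwined_set)

lemma least_closed_nbhd_intertwined_set:
  "closed_nbhd P Opn p (intertwined_set P Opn p)
    \<Longrightarrow> is_least_subset {C. closed_nbhd P Opn p C} (intertwined_set P Opn p)"
  unfolding is_least_subset_def by (simp add: intertwined_set_subset_closed_nbhd)

lemma least_closed_nbhd_eq_intertwined_set:
  assumes "semitopology P Opn" "is_least_subset {C. closed_nbhd P Opn p C} C"
  shows "C = intertwined_set P Opn p"
proof
  have C: "closed_nbhd P Opn p C" and least: "\<And>D. closed_nbhd P Opn p D \<Longrightarrow> C \<subseteq> D"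
    using assms(2) unfolding is_least_subset_def by auto
  have "C \<subseteq> sclosure P Opn U" if "U \<in> Opn" "p \<in> U" for U
    using least closed_nbhd_sclosure_open[OF assms(1) that] .
  moreover have "C \<subseteq> P"
    using C sclosure_subset_carrier unfolding closed_nbhd_def sclosed_def by metis
  ultimately show "C \<subseteq> intertwined_set P Opn p"
    by (auto simp: intertwined_set_iff_in_sclosure_open subset_iff)
  show "intertwined_set P Opn p \<subseteq> C"
    using intertwined_set_subset_closed_nbhd[OF C] .
qed

theorem proposition5p15:
  assumes "semitopology P Opn" and "p \<in> P"
  shows "(weakly_regular P Opn p \<longleftrightarrow> closed_nbhd P Opn p (intertwined_set P Opn p))
     \<and> (closed_nbhd P Opn p (intertwined_set P Opn p) \<longleftrightarrow> (\<exists>C. is_least_subset {C. closed_nbhd P Opn p C} C))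
     \<and> ((\<exists>C. is_least_subset {C. closed_nbhd P Opn p C} C) \<longleftrightarrow> is_least_subset {C. closed_nbhd P Opn p C} (intertwined_set P Opn p))"
proof -
  have "(\<exists>C. is_least_subset {C. closed_nbhd P Opn p C} C)
      \<longleftrightarrow> is_least_subset {C. closed_nbhd P Opn p C} (intertwined_set P Opn p)"
    using least_closed_nbhd_eq_intertwined_set[OF assms(1)] by blast
  moreover have "is_least_subset {C. closed_nbhd P Opn p C} (intertwined_set P Opn p)
      \<longleftrightarrow> closed_nbhd P Opn p (intertwined_set P Opn p)"
    by (metis is_least_subset_def least_closed_nbhd_intertwined_set mem_Collect_eq)
  ultimately show ?thesis
    using weakly_regular_iff_closed_nbhd_intertwined_set by simp
qed

end
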